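(* Let $r\ge 1$ be such that $2r+1=t^2$ for an (odd) integer $t$. In $\mathcal{C}(B_r)$, let $V:=X_{2\lambda_1}$ and $W_i:=X_{\gamma^{it}}$ for $1\le i\le (t-1)/2$. Then the full fusion subcategory $\mathcal{D}(B_r)$ of $\mathcal{C}(B_r)$ generated by $\mathbf{1}, V, W_1,\dots,W_{(t-1)/2}$ has exactly these objects as its simple objects (up to isomorphism), i.e. their additive span is closed under tensor product, and $\mathcal{D}(B_r)$ is symmetric.
   Context: $\mathcal{C}(B_r)$ denotes the unitary modular (ribbon fusion) category $\mathcal{C}(\mathfrak{so}_{2r+1},q,\ell)$ associated with the quantum group of $\mathfrak{so}_{2r+1}$ at $\ell=4r+2$, $q=e^{\pi i/\ell}$ (equivalently the level-2 category $SO(2r+1)_2$). With fundamental weights $\lambda_1=(1,0,\dots,0),\dots,\lambda_{r-1}=(1,\dots,1,0)$, $\lambda_r=\tfrac12(1,\dots,1)$, its simple objects are labeled by $\mathbf{0},2\lambda_1,\gamma^1,\dots,\gamma^r,\varepsilon,\varepsilon'$ where $\gamma^i=\lambda_i$ for $1\le i\le r-1$, $\gamma^r=2\lambda_r$, $\varepsilon=\lambda_r$, $\varepsilon'=\lambda_1+\lambda_r$; the simple objects $X_{\mathbf 0}=\mathbf{1}$ and $X_{2\lambda_1}$ have dimension 1, the $X_{\gamma^i}$ have dimension 2, and $X_\varepsilon,X_{\varepsilon'}$ have dimension $\sqrt{2r+1}$; all simple objects are self-dual. The normalized $S$-matrix $\tilde s$ (with $\tilde s_{\mathbf 0,\mathbf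 0}=1$) satisfies $\tilde s(2\lambda_1,2\lambda_1)=1$, $\tilde s(2\lambda_1,\gamma^i)=2$, $\tilde s(2\lambda_1,\varepsilon)=\tilde s(2\lambda_1,\varepsilon')=-\sqrt{2r+1}$, $\tilde s(\gamma^i,\gamma^j)=4\cos(2ij\pi/(2r+1))$, $\tilde s(\gamma^i,\varepsilon)=\tilde s(\gamma^i,\varepsilon')=0$. The twists are $\theta_\lambda=q^{\langle\lambda+2\rho,\lambda\rangle}$ (normalized so short roots have squared length 2). A braided fusion subcategory $\mathcal{D}$ is symmetric if $c_{Y,X}c_{X,Y}=\mathrm{Id}_{X\otimes Y}$ for all $X,Y\in\mathcal{D}$, equivalently $\tilde s_{X,Y}=\dim(X)\dim(Y)$ for all simple $X,Y$ in $\mathcal{D}$. *)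

theory Defs
  imports Complex_Main "HOL-Library.Multiset"
begin

text \<open>Combinatorial data (labels of simple objects, fusion rules, dimensions and
normalized S-matrix) of the modular category C(B_r) = SO(2r+1)_2.
Labels: Zero = 0, TwoL1 = 2 lambda_1, Gam i = gamma^i (1 <= i <= r),
Eps = epsilon, Eps' = epsilon'.\<close>

datatype lab = Zero | TwoL1 | Gam nat | Eps | Eps'

definition labels :: "nat \<Rightarrow> lab set" where
  "labels r = {Zero, TwoL1, Eps, Eps'} \<union> {Gam i | i. 1 \<le> i \<and> i \<le> r}"

text \<open>gamma^k for arbitrary k, with the usual identifications:
gamma^k = gamma^(2r+1-k), and gamma^0 stands for 1 + X_{2 lambda_1}.\<close>
definition gamf :: "nat \<Rightarrow> nat \<Rightarrow> lab multiset" where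
  "gamf r k = (let m = k mod (2*r+1) in
     if m = 0 then {#Zero, TwoL1#} else {# Gam (min m (2*r+1-m)) #})"

definition gams :: "nat \<Rightarrow> lab multiset" where
  "gams r = mset (map Gam [1..<r+1])"

text \<open>Fusion rules: fus r a b is the multiset of simple constituents of X_a \<otimes> X_b.\<close>
fun fus :: "nat \<Rightarrow> lab \<Rightarrow> lab \<Rightarrow> lab multiset" where
  "fus r Zero b = {#b#}"
| "fus r a Zero = {#a#}"
| "fus r TwoL1 TwoL1 = {#Zero#}"
| "fus r TwoL1 (Gam i) = {#Gam i#}"
| "fus r (Gam i) TwoL1 = {#Gam i#}"
| "fus r TwoL1 Eps = {#Eps'#}"
| "fus r Eps TwoL1 = {#Eps'#}"
| "fus r TwoL1 Eps' = {#Eps#}"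
| "fus r Eps' TwoL1 = {#Eps#}"
| "fus r (Gam i) (Gam j) = gamf r (i + j) + gamf r (if j \<le> i then i - j else j - i)"
| "fus r (Gam i) Eps = {#Eps, Eps'#}"
| "fus r (Gam i) Eps' = {#Eps, Eps'#}"
| "fus r Eps (Gam i) = {#Eps, Eps'#}"
| "fus r Eps' (Gam i) = {#Eps, Eps'#}"
| "fus r Eps Eps = {#Zero#} + gams r"
| "fus r Eps' Eps' = {#Zero#} + gams r"
| "fus r Eps Eps' = {#TwoL1#} + gams r"
| "fus r Eps' Eps = {#TwoL1#} + gams r"

fun fdim :: "nat \<Rightarrow> lab \<Rightarrow> real" where
  "fdim r Zero = 1"
| "fdim r TwoL1 = 1"
| "fdim r (Gam i) = 2"
| "fdim r Eps = sqrt (2*r+1)"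
| "fdim r Eps' = sqrt (2*r+1)"

text \<open>Normalized S-matrix, with the entries given in the paper; the entries
s(eps,eps), s(eps,eps'), s(eps',eps') are not needed and left unspecified.\<close>
fun st :: "nat \<Rightarrow> lab \<Rightarrow> lab \<Rightarrow> real" where
  "st r Zero b = fdim r b"
| "st r a Zero = fdim r a"
| "st r TwoL1 TwoL1 = 1"
| "st r TwoL1 (Gam i) = 2"
| "st r (Gam i) TwoL1 = 2"
| "st r TwoL1 Eps = - sqrt (2*r+1)"
| "st r Eps TwoL1 = - sqrt (2*r+1)"
| "st r TwoL1 Eps' = - sqrt (2*r+1)"
| "st r Eps' TwoL1 = - sqrt (2*r+1)"
| "st r (Gam i) (Gam j) = 4 * cos (2 * real i * real j * pi / (2*r+1))"
| "st r (Gam i) Eps = 0"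
| "st r (Gam i) Eps' = 0"
| "st r Eps (Gam i) = 0"
| "st r Eps' (Gam i) = 0"
| "st r a b = undefined (r, a, b)"

text \<open>Simple objects of the full fusion subcategory generated by the simple objects in G:
the smallest set of labels containing G and closed under taking simple constituents of
tensor products (all simples are self-dual, so closure under duals is automatic).\<close>
inductive_set gen :: "nat \<Rightarrow> lab set \<Rightarrow> lab set" for r G where
  base: "a \<in> G \<Longrightarrow> a \<in> gen r G"
| unit: "Zero \<in> gen r G"
| tens: "a \<in> gen r G \<Longrightarrow> b \<in> gen r G \<Longrightarrow> c \<in># fus r a b \<Longrightarrow> c \<in> gen r G"

text \<open>Symmetric: double braiding trivial, i.e. s(X,Y) = dim X dim Y for all simples.\<close>
definition symmetric_sub :: "nat \<Rightarrow> lab set \<Rightarrow> bool" where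
  "symmetric_sub r S \<longleftrightarrow> (\<forall>a\<in>S. \<forall>b\<in>S. st r a b = fdim r a * fdim r b)"

end

theory Submission
  imports Defs
begin

(* Write t = 2h+1 (t is odd since t^2 = 2r+1) and let D consist of 1, V and
   the labels gamma^(it) for 1 <= i <= h.  By the fusion rules, every simple constituent
   of a product of two objects of D is 1, V, or comes from gamma^(i+j)t and
   gamma^|i-j|t; since (i+j)t and |i-j|t are multiples of t below t^2 = 2r+1, the
   identification gamma^k = gamma^(2r+1-k) maps them back to some gamma^(it) with
   i <= h (or to 1 + V for the index 0).  Hence D is closed under fusion, and a set of
   labels containing 1 and closed under fusion is its own generated subcategory.
   Symmetry: s(gamma^a, gamma^b) = 4 cos(2 a b pi/(2r+1)) equals 4 = 2*2 as soon as
   2r+1 divides ab, which holds for a = it, b = jt; the other entries involving 1 and V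
   are products of dimensions by the explicit S-matrix. *)

lemma gen_eq_if_fusion_closed:
  assumes unit: "Zero \<in> S"
    and closed: "\<And>a b. a \<in> S \<Longrightarrow> b \<in> S \<Longrightarrow> set_mset (fus r a b) \<subseteq> S"
  shows "gen r S = S"
proof
  show "gen r S \<subseteq> S"
  proof
    fix x assume "x \<in> gen r S"
    then show "x \<in> S"
      by (induction rule: gen.induct) (use unit closed in auto)
  qed
qed (auto intro: gen.base)

lemma gamf_below_modulus:
  assumes "0 < k" and "k < 2*r+1"
  shows "gamf r k = {# Gam (min k (2*r+1-k)) #}"
  using assms by (simp add: gamf_def Let_def)

lemma gamf_zero: "gamf r 0 = {#Zero, TwoL1#}"
  by (simp add: gamf_def)

text \<open>The S-matrix entry of two gamma's is 4 = dim * dim whenever 2r+1 divides the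
  product of their indices, because the cosine is then evaluated at a multiple of 2 pi.\<close>
lemma st_Gam_trivial_if_dvd:
  assumes "(2*r+1) dvd (a*b)"
  shows "st r (Gam a) (Gam b) = fdim r (Gam a) * fdim r (Gam b)"
proof -
  obtain m where m: "a*b = (2*r+1)*m" using assms by blast
  have prod: "real a * real b = (2 * real r + 1) * real m"
    using arg_cong[OF m, of real] by (simp add: algebra_simps)
  have "2 * real a * real b * pi = 2 * pi * (real a * real b)" by (simp add: ac_simps)
  also have "\<dots> = (2 * real m * pi) * (2 * real r + 1)" by (simp add: prod ac_simps)
  finally have "2 * real a * real b * pi = (2 * real m * pi) * (2 * real r + 1)" .
  moreover have "2 * real r + 1 \<noteq> 0" by simp
  ultimately have "2 * real a * real b * pi / (2 * real r + 1) = 2 * real m * pi"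
    by (metis nonzero_mult_div_cancel_right)
  then have "cos (2 * real a * real b * pi / (2 * real r + 1)) = 1"
    by (simp add: cos_2npi)
  then show ?thesis by (simp add: add.commute)
qed

definition multiple_labels :: "nat \<Rightarrow> nat \<Rightarrow> lab set" where
  "multiple_labels t h = {Zero, TwoL1} \<union> {Gam (i * t) | i. 1 \<le> i \<and> i \<le> h}"

lemma odd_square_root:
  fixes r t :: nat
  assumes "2*r+1 = t^2"
  shows "t = 2 * ((t - 1) div 2) + 1"
proof -
  have "odd (t^2)" by (simp flip: assms)
  then have "odd t" by simp
  then show ?thesis by presburger
qed

text \<open>Every gamma^(kt) with 0 <= k <= 2h (as it appears in fusion of two gamma^(it))
  decomposes into labels of the candidate set, using the mirror symmetry
  gamma^(kt) = gamma^((t-k)t).\<close>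
lemma gamf_multiple_in:
  assumes t: "t = 2*h+1" and r: "2*r+1 = t^2" and k: "k \<le> 2*h"
  shows "set_mset (gamf r (k*t)) \<subseteq> multiple_labels t h"
proof (cases "k = 0")
  case True
  then show ?thesis by (simp add: gamf_zero multiple_labels_def)
next
  case False
  have tt: "2*r+1 = t*t" using r by (simp add: power2_eq_square)
  have "k < t" using k t by simp
  then have "k*t < 2*r+1" unfolding tt by (intro mult_strict_right_mono) auto
  moreover have "2*r+1 - k*t = (t-k)*t" unfolding tt by (simp add: diff_mult_distrib)
  moreover have "0 < k*t" using False t by simp
  ultimately have g: "gamf r (k*t) = {# Gam (min (k*t) ((t-k)*t)) #}"
    using gamf_below_modulus by metis
  have "min (k*t) ((t-k)*t) = min k (t-k) * t"
    by (simp add: min_def)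
  moreover have "1 \<le> min k (t-k)" "min k (t-k) \<le> h" using False k t by auto
  ultimately show ?thesis by (auto simp: g multiple_labels_def)
qed

text \<open>The candidate set consists of simple objects of C(B_r): it \<le> ht \<le> r.\<close>
lemma multiple_labels_sub:
  assumes t: "t = 2*h+1" and r: "2*r+1 = t^2"
  shows "multiple_labels t h \<subseteq> labels r"
proof -
  have "2*(h*t) \<le> 2*r" using r t by (simp add: power2_eq_square algebra_simps)
  then have "i*t \<le> r" if "i \<le> h" for i
    using mult_right_mono[OF that, of t] by linarith
  moreover have "1 \<le> i*t" if "1 \<le> i" for i using that t by simp
  ultimately show ?thesis by (fastforce simp: multiple_labels_def labels_def)
qed

lemma fus_Gam_multiples:
  assumes t: "t = 2*h+1" and r: "2*r+1 = t^2"
    and ij: "i \<le> h" "j \<le> h"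
  shows "set_mset (fus r (Gam (i*t)) (Gam (j*t))) \<subseteq> multiple_labels t h"
proof -
  have "0 < t" using t by simp
  have sum: "i*t + j*t = (i+j)*t" by (simp add: algebra_simps)
  have diff: "(if j*t \<le> i*t then i*t - j*t else j*t - i*t)
              = (if j \<le> i then i - j else j - i) * t"
    using \<open>0 < t\<close> by (simp add: diff_mult_distrib)
  have "i+j \<le> 2*h" "(if j \<le> i then i - j else j - i) \<le> 2*h" using ij by auto
  then have "set_mset (gamf r ((i+j)*t)) \<subseteq> multiple_labels t h"
    "set_mset (gamf r ((if j \<le> i then i - j else j - i)*t)) \<subseteq> multiple_labels t h"
    by (simp_all only: gamf_multiple_in[OF t r])
  moreover have "fus r (Gam (i*t)) (Gam (j*t))
      = gamf r ((i+j)*t) + gamf r ((if j \<le> i then i - j else j - i)*t)"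
    by (simp only: fus.simps sum diff)
  ultimately show ?thesis by simp
qed

lemma multiple_labels_fusion_closed:
  assumes t: "t = 2*h+1" and r: "2*r+1 = t^2"
    and a: "a \<in> multiple_labels t h" and b: "b \<in> multiple_labels t h"
  shows "set_mset (fus r a b) \<subseteq> multiple_labels t h"
proof -
  have Gam_cases: "x = Zero \<or> x = TwoL1 \<or> (\<exists>i\<le>h. x = Gam (i*t))"
    if "x \<in> multiple_labels t h" for x
    using that by (auto simp: multiple_labels_def)
  from Gam_cases[OF a] Gam_cases[OF b] show ?thesis
  proof (elim disjE exE conjE)
    fix i j assume "i \<le> h" "a = Gam (i*t)" "j \<le> h" "b = Gam (j*t)"
    then show ?thesis using fus_Gam_multiples[OF t r] by simp
  qed (use a b in \<open>auto simp: multiple_labels_def\<close>)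
qed

lemma multiple_labels_symmetric:
  assumes r: "2*r+1 = t^2"
  shows "symmetric_sub r (multiple_labels t h)"
proof -
  have "st r (Gam (i*t)) (Gam (j*t)) = 4" for i j
  proof -
    have "(i*t) * (j*t) = (i*j) * (2*r+1)"
      unfolding r by (simp add: power2_eq_square algebra_simps)
    then have "(2*r+1) dvd (i*t) * (j*t)" by (metis dvd_triv_right)
    from st_Gam_trivial_if_dvd[OF this] show ?thesis by simp
  qed
  then show ?thesis by (auto simp: symmetric_sub_def multiple_labels_def)
qed

theorem lemma3p2:
  fixes r t :: nat
  assumes "r \<ge> 1" and "2 * r + 1 = t ^ 2"
  defines "D \<equiv> {Zero, TwoL1} \<union> {Gam (i * t) | i. 1 \<le> i \<and> i \<le> (t - 1) div 2}"
  shows "D \<subseteq> labels r \<and> gen r D = D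
         \<and> (\<forall>a\<in>D. \<forall>b\<in>D. set_mset (fus r a b) \<subseteq> D)
         \<and> symmetric_sub r D"
proof -
  define h where "h = (t - 1) div 2"
  have t: "t = 2*h+1" using odd_square_root[OF assms(2)] by (simp add: h_def)
  have D: "D = multiple_labels t h" by (simp add: D_def h_def multiple_labels_def)
  have closed: "\<forall>a\<in>D. \<forall>b\<in>D. set_mset (fus r a b) \<subseteq> D"
    using multiple_labels_fusion_closed[OF t assms(2)] unfolding D by blast
  have "Zero \<in> D" by (simp add: D multiple_labels_def)
  then have "gen r D = D"
    using closed by (intro gen_eq_if_fusion_closed) blast+
  then show ?thesis
    using closed multiple_labels_sub[OF t assms(2)] multiple_labels_symmetric[OF assms(2)]
    by (simp add: D)
qed

end
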